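(* Let $f:[0,1]\to(0,1)$ be a $C^3$ function whose fixed points are isolated. For any initial environment $w_0\in([0,1]\times(0,+\infty))^{\mathbb{Z}}$ and any integer $k\ge0$, $\mathbb{P}_{0,w_0}[X_n\to+\infty]>0$ if and only if $\mathbb{P}_{k,w_0}[X_n>k\ \text{for all } n>0]>0$.
   Context: Generalized reinforced random walk started at $(k,w_0)$, $w_0=(\alpha_0^x,l_0^x)_{x\in\mathbb{Z}}$, associated to $f$ (law $\mathbb{P}_{k,w_0}$): $X_0=k$; for $x\in\mathbb{Z}$, $n\ge0$ let $L_n^x=\sum_{j=0}^{n-1}1_{\{X_j=x\}}$ and $\tilde\alpha_n^x=\frac{1}{l_0^x+L_n^x}\big(\alpha_0^xl_0^x+\sum_{j=0}^{n-1}1_{\{X_j=x,X_{j+1}=x+1\}}\big)$; given the past, if $X_n=x$ then $X_{n+1}=x+1$ with probability $f(\tilde\alpha_n^x)$ and $X_{n+1}=x-1$ otherwise. *)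

theory Defs
  imports "HOL-Probability.Probability"
begin

text \<open>An environment assigns to each site x the pair (alpha_0^x, l_0^x).\<close>
type_synonym env = "int \<Rightarrow> real \<times> real"

definition valid_env :: "env \<Rightarrow> bool" where
  "valid_env w \<longleftrightarrow> (\<forall>x. 0 \<le> fst (w x) \<and> fst (w x) \<le> 1 \<and> 0 < snd (w x))"

text \<open>Given the path prefix xs = [X_0, ..., X_n] (nonempty), the local time
  L_n^x and the number of right jumps from x before time n.\<close>
definition loc_time :: "int list \<Rightarrow> int \<Rightarrow> nat" where
  "loc_time xs x = card {j. j < length xs - 1 \<and> xs ! j = x}"

definition right_jumps :: "int list \<Rightarrow> int \<Rightarrow> nat" where
  "right_jumps xs x = card {j. j < length xs - 1 \<and> xs ! j = x \<and> xs ! (j+1) = x + 1}"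

definition alpha_tilde :: "env \<Rightarrow> int list \<Rightarrow> int \<Rightarrow> real" where
  "alpha_tilde w xs x =
     (fst (w x) * snd (w x) + real (right_jumps xs x)) / (snd (w x) + real (loc_time xs x))"

definition step_prob :: "(real \<Rightarrow> real) \<Rightarrow> env \<Rightarrow> int list \<Rightarrow> int \<Rightarrow> real" where
  "step_prob f w xs y =
     (let x = last xs in
      if y = x + 1 then f (alpha_tilde w xs x)
      else if y = x - 1 then 1 - f (alpha_tilde w xs x)
      else 0)"

definition path_prob :: "(real \<Rightarrow> real) \<Rightarrow> env \<Rightarrow> int \<Rightarrow> int list \<Rightarrow> real" where
  "path_prob f w k xs =
     (if hd xs = k then 1 else 0) *
     (\<Prod>j\<in>{0..<length xs - 1}. step_prob f w (take (j+1) xs) (xs ! (j+1)))"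

definition is_grrw ::
  "(real \<Rightarrow> real) \<Rightarrow> env \<Rightarrow> int \<Rightarrow> 'a measure \<Rightarrow> (nat \<Rightarrow> 'a \<Rightarrow> int) \<Rightarrow> bool" where
  "is_grrw f w k M X \<longleftrightarrow>
     prob_space M \<and>
     (\<forall>n. X n \<in> measurable M (count_space UNIV)) \<and>
     (\<forall>xs. xs \<noteq> [] \<longrightarrow>
        measure M {\<omega> \<in> space M. \<forall>i<length xs. X i \<omega> = xs ! i} = path_prob f w k xs)"

definition C3_on_unit :: "(real \<Rightarrow> real) \<Rightarrow> bool" where
  "C3_on_unit f \<longleftrightarrow>
     (\<exists>D :: nat \<Rightarrow> real \<Rightarrow> real. D 0 = f \<and>
        (\<forall>i<3. \<forall>x\<in>{0..1}. (D i has_real_derivative D (Suc i) x) (at x within {0..1})) \<and>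
        continuous_on {0..1} (D 3))"

definition isolated_fixed_points :: "(real \<Rightarrow> real) \<Rightarrow> bool" where
  "isolated_fixed_points f \<longleftrightarrow>
     (\<forall>x\<in>{0..1}. f x = x \<longrightarrow>
        (\<exists>e>0. \<forall>y\<in>{0..1}. f y = y \<and> \<bar>y - x\<bar> < e \<longrightarrow> y = x))"

end

theory Submission
  imports Defs
begin

text \<open>The transition probabilities of the walk at a site only depend on the statistics collected
  at that site. So if two prefixes \<open>p @ u\<close> and \<open>q @ u\<close> share a final piece \<open>u\<close> ending at a
  height \<open>m\<close> that dominates \<open>p\<close> and \<open>q\<close>, then conditionally on the first step to \<open>m + 1\<close> the
  two walks have the same chance of staying above \<open>m\<close> forever. This transfers positivity between
  the walk started at 0 and the walk started at \<open>k\<close>. An escaping walk from 0 has, with positive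
  probability, a last visit to \<open>k\<close> followed by a last record height, which produces a walk from
  \<open>k\<close> never returning to \<open>k\<close>; conversely a walk from \<open>k\<close> staying above \<open>k\<close> transfers to a walk
  from 0 which climbs to \<open>k\<close> and then stays above \<open>k\<close>. Finally, a walk which stays above a level
  \<open>a\<close> escapes to infinity almost surely: each visit below \<open>L\<close> leaves it a chance of at least
  \<open>c ^ (L - a)\<close> to fall to \<open>a\<close>, where \<open>c > 0\<close> bounds \<open>f\<close> away from 0 and 1.\<close>

section \<open>Sums over nearest-neighbour continuations\<close>

text \<open>\<open>nn_sum g n zs\<close> is the sum of \<open>g\<close> over the \<open>2 ^ n\<close> continuations of \<open>zs\<close> by \<open>n\<close>
  steps of size \<open>\<plusminus>1\<close>; it plays the role of an expectation over the next \<open>n\<close> steps.\<close>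

fun nn_sum :: "(int list \<Rightarrow> real) \<Rightarrow> nat \<Rightarrow> int list \<Rightarrow> real" where
  "nn_sum g 0 zs = g zs"
| "nn_sum g (Suc n) zs = nn_sum g n (zs @ [last zs + 1]) + nn_sum g n (zs @ [last zs - 1])"

definition nn_extension :: "int list \<Rightarrow> nat \<Rightarrow> int list \<Rightarrow> bool" where
  "nn_extension zs n ys \<longleftrightarrow> take (length zs) ys = zs \<and> length ys = length zs + n \<and>
     (\<forall>i. length zs \<le> Suc i \<longrightarrow> Suc i < length ys \<longrightarrow> \<bar>ys ! Suc i - ys ! i\<bar> = 1)"

lemma nn_extension_snoc:
  assumes "zs \<noteq> []" "nn_extension (zs @ [y]) n ys" "\<bar>y - last zs\<bar> = 1"
  shows "nn_extension zs (Suc n) ys"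
proof -
  have t: "take (Suc (length zs)) ys = zs @ [y]" and l: "length ys = Suc (length zs) + n"
    using assms(2) unfolding nn_extension_def by auto
  have "take (length zs) ys = take (length zs) (take (Suc (length zs)) ys)" by simp
  then have tz: "take (length zs) ys = zs" using t by simp
  have "ys ! length zs = take (Suc (length zs)) ys ! length zs" by simp
  then have yy: "ys ! length zs = y" using t by simp
  have "ys ! (length zs - 1) = take (length zs) ys ! (length zs - 1)"
    using assms(1) by simp
  then have yz: "ys ! (length zs - 1) = last zs" using tz assms(1) by (simp add: last_conv_nth)
  show ?thesis unfolding nn_extension_def
  proof (intro conjI allI impI)
    show "take (length zs) ys = zs" by fact
    show "length ys = length zs + Suc n" using l by simp
    fix i assume i: "length zs \<le> Suc i" "Suc i < length ys"
    show "\<bar>ys ! Suc i - ys ! i\<bar> = 1"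
    proof (cases "Suc i = length zs")
      case True
      then have "i = length zs - 1" by simp
      then show ?thesis using True yy yz assms(3) by (simp add: abs_minus_commute)
    next
      case False
      then show ?thesis using assms(2) i unfolding nn_extension_def by auto
    qed
  qed
qed

lemma nn_extension_nth: "nn_extension zs n ys \<Longrightarrow> i < length zs \<Longrightarrow> ys ! i = zs ! i"
  unfolding nn_extension_def by (metis nth_take)

lemma length_nn_extension: "nn_extension zs n ys \<Longrightarrow> length ys = length zs + n"
  unfolding nn_extension_def by simp

lemma nn_sum_mono:
  assumes "zs \<noteq> []" "\<And>ys. nn_extension zs n ys \<Longrightarrow> g ys \<le> h ys"
  shows "nn_sum g n zs \<le> nn_sum h n zs"
  using assms
proof (induction n arbitrary: zs)
  case 0
  then show ?case by (simp add: nn_extension_def)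
next
  case (Suc n)
  have "nn_sum g n (zs @ [last zs + 1]) \<le> nn_sum h n (zs @ [last zs + 1])"
    by (rule Suc.IH) (use Suc.prems nn_extension_snoc in auto)
  moreover have "nn_sum g n (zs @ [last zs - 1]) \<le> nn_sum h n (zs @ [last zs - 1])"
    by (rule Suc.IH) (use Suc.prems nn_extension_snoc in auto)
  ultimately show ?case by simp
qed

lemma nn_sum_cong:
  assumes "zs \<noteq> []" "\<And>ys. nn_extension zs n ys \<Longrightarrow> g ys = h ys"
  shows "nn_sum g n zs = nn_sum h n zs"
  using nn_sum_mono[of zs n g h] nn_sum_mono[of zs n h g] assms by force

lemma nn_sum_zero: "nn_sum (\<lambda>_. 0) n zs = 0"
  by (induction n arbitrary: zs) auto

lemma nn_sum_eq_0:
  assumes "zs \<noteq> []" "\<And>ys. nn_extension zs n ys \<Longrightarrow> g ys = 0"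
  shows "nn_sum g n zs = 0"
  using nn_sum_cong[OF assms] nn_sum_zero by simp

lemma nn_sum_add: "nn_sum (\<lambda>y. g y + h y) n zs = nn_sum g n zs + nn_sum h n zs"
  by (induction n arbitrary: zs) auto

lemma nn_sum_cmult: "nn_sum (\<lambda>y. c * g y) n zs = c * nn_sum g n zs"
  by (induction n arbitrary: zs) (auto simp: algebra_simps)

lemma nn_sum_nonneg: "(\<And>ys. 0 \<le> g ys) \<Longrightarrow> 0 \<le> nn_sum g n zs"
  by (induction n arbitrary: zs) (auto intro: add_nonneg_nonneg)

lemma nn_sum_add_steps: "nn_sum g (m + n) zs = nn_sum (\<lambda>ws. nn_sum g n ws) m zs"
  by (induction m arbitrary: zs) auto

lemma nn_sum_append: "v \<noteq> [] \<Longrightarrow> nn_sum g n (s @ v) = nn_sum (\<lambda>zs. g (s @ zs)) n v"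
  by (induction n arbitrary: v) auto

fun down_path :: "int list \<Rightarrow> nat \<Rightarrow> int list" where
  "down_path zs 0 = zs"
| "down_path zs (Suc n) = down_path (zs @ [last zs - 1]) n"

lemma nn_sum_ge_down_path: "(\<And>ys. 0 \<le> g ys) \<Longrightarrow> g (down_path zs n) \<le> nn_sum g n zs"
proof (induction n arbitrary: zs)
  case (Suc n)
  have "g (down_path zs (Suc n)) \<le> nn_sum g n (zs @ [last zs - 1])" using Suc by simp
  moreover have "0 \<le> nn_sum g n (zs @ [last zs + 1])" using Suc.prems nn_sum_nonneg by blast
  ultimately show ?case by simp
qed simp

lemma length_down_path: "length (down_path zs n) = length zs + n"
  by (induction n arbitrary: zs) auto

lemma last_down_path: "zs \<noteq> [] \<Longrightarrow> last (down_path zs n) = last zs - int n"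
  by (induction n arbitrary: zs) auto

definition nn_path :: "int list \<Rightarrow> bool" where
  "nn_path xs \<longleftrightarrow> (\<forall>i. Suc i < length xs \<longrightarrow> \<bar>xs ! Suc i - xs ! i\<bar> = 1)"

lemma nn_path_drop: "nn_path xs \<Longrightarrow> nn_path (drop t xs)"
  unfolding nn_path_def by (auto simp: add.commute[of t] dest: spec[of _ "_ + t"])

lemma nn_path_snoc_iff:
  assumes "xs \<noteq> []"
  shows "nn_path (xs @ [y]) \<longleftrightarrow> nn_path xs \<and> \<bar>y - last xs\<bar> = 1"
proof
  assume h: "nn_path (xs @ [y])"
  have "Suc (length xs - 1) < length (xs @ [y])" using assms by simp
  then have "\<bar>(xs @ [y]) ! Suc (length xs - 1) - (xs @ [y]) ! (length xs - 1)\<bar> = 1"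
    using h unfolding nn_path_def by blast
  moreover have "(xs @ [y]) ! Suc (length xs - 1) = y" "(xs @ [y]) ! (length xs - 1) = last xs"
    using assms by (auto simp: nth_append last_conv_nth)
  ultimately have "\<bar>y - last xs\<bar> = 1" by simp
  moreover have "nn_path xs"
    unfolding nn_path_def
  proof (intro allI impI)
    fix i assume "Suc i < length xs"
    then show "\<bar>xs ! Suc i - xs ! i\<bar> = 1"
      using h unfolding nn_path_def by (auto simp: nth_append dest: spec[of _ i])
  qed
  ultimately show "nn_path xs \<and> \<bar>y - last xs\<bar> = 1" by simp
next
  assume h: "nn_path xs \<and> \<bar>y - last xs\<bar> = 1"
  show "nn_path (xs @ [y])"
    unfolding nn_path_def
  proof (intro allI impI)
    fix i assume i: "Suc i < length (xs @ [y])"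
    show "\<bar>(xs @ [y]) ! Suc i - (xs @ [y]) ! i\<bar> = 1"
    proof (cases "Suc i < length xs")
      case True
      then show ?thesis using h unfolding nn_path_def by (simp add: nth_append)
    next
      case False
      then have "i = length xs - 1" using i by simp
      then show ?thesis using h assms by (simp add: nth_append last_conv_nth)
    qed
  qed
qed

section \<open>Path probabilities\<close>

lemma right_jumps_le_loc_time: "right_jumps xs x \<le> loc_time xs x"
  unfolding right_jumps_def loc_time_def by (rule card_mono) auto

lemma alpha_tilde_in_unit:
  assumes "valid_env w"
  shows "alpha_tilde w xs x \<in> {0..1}"
proof -
  have a: "0 \<le> fst (w x)" "fst (w x) \<le> 1" "0 < snd (w x)"
    using assms unfolding valid_env_def by auto
  have "fst (w x) * snd (w x) \<le> snd (w x)"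
    using a mult_right_mono[of "fst (w x)" 1 "snd (w x)"] by simp
  then have "fst (w x) * snd (w x) + real (right_jumps xs x) \<le> snd (w x) + real (loc_time xs x)"
    using right_jumps_le_loc_time[of xs x] by linarith
  then show ?thesis unfolding alpha_tilde_def using a by (simp add: divide_le_eq_1)
qed

lemma step_prob_up: "step_prob f w xs (last xs + 1) = f (alpha_tilde w xs (last xs))"
  unfolding step_prob_def by (simp add: Let_def)

lemma step_prob_down: "step_prob f w xs (last xs - 1) = 1 - f (alpha_tilde w xs (last xs))"
  unfolding step_prob_def by (simp add: Let_def)

lemma step_prob_other: "y \<noteq> last xs + 1 \<Longrightarrow> y \<noteq> last xs - 1 \<Longrightarrow> step_prob f w xs y = 0"
  unfolding step_prob_def by (simp add: Let_def)

lemma step_prob_ge: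
  assumes "valid_env w" "\<forall>x\<in>{0..1}. c \<le> f x \<and> c \<le> 1 - f x" "\<bar>y - last xs\<bar> = 1"
  shows "c \<le> step_prob f w xs y"
proof -
  have "c \<le> f (alpha_tilde w xs (last xs))" "c \<le> 1 - f (alpha_tilde w xs (last xs))"
    using assms(2) alpha_tilde_in_unit[OF assms(1)] by auto
  moreover have "y = last xs + 1 \<or> y = last xs - 1" using assms(3) by linarith
  ultimately show ?thesis unfolding step_prob_def by (auto simp: Let_def)
qed

lemma step_prob_nonneg:
  assumes "valid_env w" "\<forall>x\<in>{0..1}. 0 < f x \<and> f x < 1"
  shows "0 \<le> step_prob f w xs y"
proof -
  have "0 < f (alpha_tilde w xs (last xs))" "f (alpha_tilde w xs (last xs)) < 1"
    using assms(2) alpha_tilde_in_unit[OF assms(1)] by auto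
  then show ?thesis unfolding step_prob_def by (auto simp: Let_def)
qed

lemma path_prob_singleton: "path_prob f w k [x] = of_bool (x = k)"
  unfolding path_prob_def by simp

lemma path_prob_snoc:
  assumes "xs \<noteq> []"
  shows "path_prob f w k (xs @ [y]) = path_prob f w k xs * step_prob f w xs y"
proof -
  obtain n where n: "length xs = Suc n" using assms by (cases xs) auto
  have "(\<Prod>j\<in>{0..<n}. step_prob f w (take (j+1) (xs @ [y])) ((xs @ [y]) ! (j+1)))
      = (\<Prod>j\<in>{0..<n}. step_prob f w (take (j+1) xs) (xs ! (j+1)))"
    by (rule prod.cong) (use n in \<open>auto simp: nth_append\<close>)
  moreover have "take (n+1) (xs @ [y]) = xs" "(xs @ [y]) ! (n+1) = y"
    using n by (simp, metis Suc_eq_plus1 nth_append_length)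
  ultimately show ?thesis unfolding path_prob_def using assms n by simp
qed

lemma path_prob_nonneg:
  assumes "valid_env w" "\<forall>x\<in>{0..1}. 0 < f x \<and> f x < 1"
  shows "0 \<le> path_prob f w k xs"
  unfolding path_prob_def using step_prob_nonneg[OF assms]
  by (intro mult_nonneg_nonneg prod_nonneg) auto

lemma path_prob_split:
  assumes "xs \<noteq> []"
  shows "path_prob f w k (xs @ [last xs + 1]) + path_prob f w k (xs @ [last xs - 1])
    = path_prob f w k xs"
  by (simp only: path_prob_snoc[OF assms] step_prob_up step_prob_down) (simp add: algebra_simps)

lemma nn_sum_path_prob: "xs \<noteq> [] \<Longrightarrow> nn_sum (path_prob f w k) n xs = path_prob f w k xs"
  by (induction n arbitrary: xs) (simp_all add: path_prob_split)

lemma nn_sum_le_path_prob_Suc: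
  assumes "zs \<noteq> []" "\<And>y. nn_sum g n (zs @ [y]) \<le> C * path_prob f w k (zs @ [y])"
  shows "nn_sum g (Suc n) zs \<le> C * path_prob f w k zs"
proof -
  have "nn_sum g (Suc n) zs
      \<le> C * path_prob f w k (zs @ [last zs + 1]) + C * path_prob f w k (zs @ [last zs - 1])"
    using assms(2)[of "last zs + 1"] assms(2)[of "last zs - 1"] by simp
  also have "\<dots> = C * path_prob f w k zs"
    using path_prob_split[OF assms(1)] by (simp add: distrib_left[symmetric])
  finally show ?thesis .
qed

lemma path_prob_pos:
  assumes "valid_env w" "\<forall>x\<in>{0..1}. 0 < f x \<and> f x < 1"
  shows "xs \<noteq> [] \<Longrightarrow> hd xs = k \<Longrightarrow> nn_path xs \<Longrightarrow> 0 < path_prob f w k xs"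
proof (induction xs rule: rev_induct)
  case (snoc y xs)
  show ?case
  proof (cases "xs = []")
    case True
    then show ?thesis using snoc by (simp add: path_prob_singleton)
  next
    case False
    then have "nn_path xs" and yl: "\<bar>y - last xs\<bar> = 1"
      using snoc.prems(3) nn_path_snoc_iff by auto
    then have "0 < path_prob f w k xs" using snoc False by simp
    moreover have "0 < step_prob f w xs y"
      using yl assms(2) alpha_tilde_in_unit[OF assms(1)]
      unfolding step_prob_def by (auto simp: Let_def abs_if split: if_splits)
    ultimately show ?thesis using path_prob_snoc[OF False] by simp
  qed
qed simp

lemma path_prob_down_path_ge:
  assumes "valid_env w" "\<forall>x\<in>{0..1}. c \<le> f x \<and> c \<le> 1 - f x" "0 \<le> c"
    "\<forall>x\<in>{0..1}. 0 < f x \<and> f x < 1"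
  shows "zs \<noteq> [] \<Longrightarrow> c ^ n * path_prob f w k zs \<le> path_prob f w k (down_path zs n)"
proof (induction n arbitrary: zs)
  case (Suc n)
  have "c * path_prob f w k zs \<le> step_prob f w zs (last zs - 1) * path_prob f w k zs"
    by (rule mult_right_mono[OF step_prob_ge[OF assms(1,2)] path_prob_nonneg[OF assms(1,4)]]) simp
  also have "\<dots> = path_prob f w k (zs @ [last zs - 1])"
    by (simp add: path_prob_snoc[OF Suc.prems])
  finally have "c ^ n * (c * path_prob f w k zs) \<le> c ^ n * path_prob f w k (zs @ [last zs - 1])"
    using assms(3) by (simp add: mult_left_mono)
  also have "\<dots> \<le> path_prob f w k (down_path zs (Suc n))" using Suc.IH by simp
  finally show ?case by (simp add: ac_simps)
qed simp

lemma card_shift_eq: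
  assumes "\<forall>j<length p. \<not> P j"
  shows "card {j. j < length p + m \<and> P j} = card {j. j < m \<and> P (j + length p)}"
proof -
  have "{j. j < length p + m \<and> P j} = (\<lambda>j. j + length p) ` {j. j < m \<and> P (j + length p)}"
  proof (rule set_eqI, rule iffI)
    fix j assume "j \<in> {j. j < length p + m \<and> P j}"
    then have j: "j < length p + m" "P j" by auto
    then have ge: "length p \<le> j" using assms by (meson not_le)
    then have "j - length p \<in> {j. j < m \<and> P (j + length p)}" using j by simp
    moreover have "j = (j - length p) + length p" using ge by simp
    ultimately show "j \<in> (\<lambda>j. j + length p) ` {j. j < m \<and> P (j + length p)}" by blast
  qed auto
  moreover have "inj (\<lambda>j::nat. j + length p)" by (simp add: inj_on_def)
  ultimately show ?thesis by (simp add: card_image inj_on_subset)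
qed

lemma loc_time_append:
  assumes "x \<notin> set p" "v \<noteq> []"
  shows "loc_time (p @ v) x = loc_time v x"
proof -
  have l: "length (p @ v) - 1 = length p + (length v - 1)" using assms(2) by (cases v) auto
  have "\<forall>j<length p. \<not> (p @ v) ! j = x" using assms(1) by (auto simp: nth_append)
  then show ?thesis unfolding loc_time_def l
    using card_shift_eq[of p "\<lambda>j. (p @ v) ! j = x" "length v - 1"] by (simp add: nth_append)
qed

lemma right_jumps_append:
  assumes "x \<notin> set p" "v \<noteq> []"
  shows "right_jumps (p @ v) x = right_jumps v x"
proof -
  have l: "length (p @ v) - 1 = length p + (length v - 1)" using assms(2) by (cases v) auto
  have "\<forall>j<length p. \<not> ((p @ v) ! j = x \<and> (p @ v) ! (j+1) = x + 1)"
    using assms(1) by (auto simp: nth_append)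
  then show ?thesis unfolding right_jumps_def l
    using card_shift_eq[of p "\<lambda>j. (p @ v) ! j = x \<and> (p @ v) ! (j+1) = x + 1" "length v - 1"]
    by (simp add: nth_append)
qed

lemma step_prob_append_eq:
  assumes "v \<noteq> []" "\<forall>e\<in>set p. e < last v" "\<forall>e\<in>set q. e < last v"
  shows "step_prob f w (p @ v) y = step_prob f w (q @ v) y"
proof -
  have "last v \<notin> set p" "last v \<notin> set q" using assms by auto
  then show ?thesis unfolding step_prob_def alpha_tilde_def using assms(1)
    by (simp add: loc_time_append right_jumps_append Let_def)
qed

text \<open>Once the walk is above everything visited by \<open>p\<close> and \<open>q\<close>, the two histories \<open>p @ u\<close>
  and \<open>q @ u\<close> induce the same transitions, so continuations \<open>r\<close> above \<open>last u\<close> have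
  proportional probabilities.\<close>

lemma path_prob_cross_identity:
  assumes venv: "valid_env w" and u: "u \<noteq> []"
    and pm: "\<forall>e\<in>set p. e \<le> last u" and qm: "\<forall>e\<in>set q. e \<le> last u"
  shows "r \<noteq> [] \<Longrightarrow> (\<forall>e\<in>set r. last u < e) \<Longrightarrow>
    path_prob f w kq (q @ u @ r) * path_prob f w kp (p @ u @ [last u + 1])
    = path_prob f w kp (p @ u @ r) * path_prob f w kq (q @ u @ [last u + 1])"
proof (induction r rule: rev_induct)
  case (snoc z r)
  show ?case
  proof (cases "r = []")
    case True
    then have z: "last u < z" using snoc.prems by simp
    show ?thesis
    proof (cases "z = last u + 1")
      case False
      have l1: "last (p @ u) = last u" "last (q @ u) = last u" using u by simp_all
      have "step_prob f w (p @ u) z = 0" "step_prob f w (q @ u) z = 0"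
        using False z l1 by (auto intro!: step_prob_other)
      then show ?thesis using \<open>r = []\<close> u path_prob_snoc[of "q @ u" f w kq z]
          path_prob_snoc[of "p @ u" f w kp z] by simp
    qed (use \<open>r = []\<close> in simp)
  next
    case False
    have ih: "path_prob f w kq (q @ u @ r) * path_prob f w kp (p @ u @ [last u + 1])
      = path_prob f w kp (p @ u @ r) * path_prob f w kq (q @ u @ [last u + 1])"
      using snoc.IH[OF False] snoc.prems by simp
    have "last u < last (u @ r)" using snoc.prems False by simp
    then have st: "step_prob f w (p @ (u @ r)) z = step_prob f w (q @ (u @ r)) z"
      by (intro step_prob_append_eq) (use u pm qm in fastforce)+
    have "path_prob f w kq (q @ u @ r @ [z]) = path_prob f w kq (q @ u @ r) * step_prob f w (q @ (u @ r)) z"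
         "path_prob f w kp (p @ u @ r @ [z]) = path_prob f w kp (p @ u @ r) * step_prob f w (p @ (u @ r)) z"
      using path_prob_snoc[of "q @ u @ r" f w kq z] path_prob_snoc[of "p @ u @ r" f w kp z] u by simp_all
    then show ?thesis unfolding append_assoc[symmetric] using ih st by (simp add: ac_simps)
  qed
qed simp

section \<open>The walk as a process\<close>

locale grrw_walk =
  fixes f :: "real \<Rightarrow> real" and w :: env and k :: int
    and M :: "'a measure" and X :: "nat \<Rightarrow> 'a \<Rightarrow> int"
  assumes f_bounds: "\<forall>x\<in>{0..1}. 0 < f x \<and> f x < 1" and valid_w: "valid_env w"
    and law: "is_grrw f w k M X"
begin

abbreviation pp where "pp \<equiv> path_prob f w k"

sublocale prob_space M using law unfolding is_grrw_def by simp

lemma X_measurable: "X n \<in> measurable M (count_space UNIV)"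
  using law unfolding is_grrw_def by simp

lemma measure_cylinder:
  "xs \<noteq> [] \<Longrightarrow> measure M {\<omega> \<in> space M. \<forall>i<length xs. X i \<omega> = xs ! i} = pp xs"
  using law unfolding is_grrw_def by simp

lemma null_setsI_measure: "A \<in> sets M \<Longrightarrow> measure M A = 0 \<Longrightarrow> A \<in> null_sets M"
  by (simp add: emeasure_eq_measure null_setsI)

lemma pp_nonneg: "0 \<le> pp xs"
  by (rule path_prob_nonneg[OF valid_w f_bounds])

lemma X_pred_sets: "{\<omega> \<in> space M. P (X t \<omega>)} \<in> sets M"
proof -
  have "X t -` {v. P v} \<inter> space M \<in> sets M" using X_measurable by (rule measurable_sets) simp
  moreover have "X t -` {v. P v} \<inter> space M = {\<omega> \<in> space M. P (X t \<omega>)}" by auto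
  ultimately show ?thesis by simp
qed

lemma X_all_sets: "{\<omega> \<in> space M. \<forall>t. P t (X t \<omega>)} \<in> sets M"
proof -
  have "(\<Inter>t. {\<omega> \<in> space M. P t (X t \<omega>)}) \<in> sets M"
    using X_pred_sets by (intro sets.countable_INT) auto
  moreover have "{\<omega> \<in> space M. \<forall>t. P t (X t \<omega>)} = space M \<inter> (\<Inter>t. {\<omega> \<in> space M. P t (X t \<omega>)})"
    by auto
  ultimately show ?thesis by simp
qed

definition traj :: "'a \<Rightarrow> nat \<Rightarrow> int list" where
  "traj \<omega> n = map (\<lambda>i. X i \<omega>) [0..<Suc n]"

lemma length_traj[simp]: "length (traj \<omega> n) = Suc n"
  unfolding traj_def by simp

lemma traj_nth: "i \<le> n \<Longrightarrow> traj \<omega> n ! i = X i \<omega>"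
  unfolding traj_def by (simp del: upt_Suc add: nth_map_upt)

lemma take_traj: "m \<le> n \<Longrightarrow> take (Suc m) (traj \<omega> n) = traj \<omega> m"
  by (simp add: list_eq_iff_nth_eq traj_nth)

lemma traj_Suc: "traj \<omega> (Suc n) = traj \<omega> n @ [X (Suc n) \<omega>]"
  unfolding traj_def by simp

lemma traj_eq_iff: "length xs = Suc n \<Longrightarrow> traj \<omega> n = xs \<longleftrightarrow> (\<forall>i<length xs. X i \<omega> = xs ! i)"
  by (auto simp: list_eq_iff_nth_eq traj_nth)

lemma traj_measurable: "(\<lambda>\<omega>. traj \<omega> n) \<in> measurable M (count_space UNIV)"
proof (subst measurable_count_space_eq2_countable, safe)
  fix ys :: "int list"
  show "(\<lambda>\<omega>. traj \<omega> n) -` {ys} \<inter> space M \<in> sets M"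
  proof (cases "length ys = Suc n")
    case True
    then have "(\<lambda>\<omega>. traj \<omega> n) -` {ys} \<inter> space M
        = space M \<inter> (\<Inter>i\<in>{..<Suc n}. {\<omega> \<in> space M. X i \<omega> = ys ! i})"
      by (auto simp: traj_eq_iff traj_nth less_Suc_eq_le)
    also have "\<dots> \<in> sets M" using X_pred_sets by auto
    finally show ?thesis .
  next
    case False
    then have "(\<lambda>\<omega>. traj \<omega> n) -` {ys} \<inter> space M = {}" by auto
    then show ?thesis by simp
  qed
qed simp

lemma traj_pred_sets: "{\<omega> \<in> space M. Q (traj \<omega> n)} \<in> sets M"
proof -
  have "(\<lambda>\<omega>. traj \<omega> n) -` {ys. Q ys} \<inter> space M \<in> sets M"
    using traj_measurable by (rule measurable_sets) simp
  moreover have "(\<lambda>\<omega>. traj \<omega> n) -` {ys. Q ys} \<inter> space M = {\<omega> \<in> space M. Q (traj \<omega> n)}" by auto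
  ultimately show ?thesis by simp
qed

lemma measure_traj_eq: "xs \<noteq> [] \<Longrightarrow> measure M {\<omega> \<in> space M. traj \<omega> (length xs - 1) = xs} = pp xs"
  using measure_cylinder by (subst traj_eq_iff) auto

lemma traj_prefix:
  assumes "zs \<noteq> []" "length zs \<le> n" "take (length zs) (traj \<omega> n) = zs"
  shows "traj \<omega> (length zs) = zs @ [X (length zs) \<omega>]"
proof -
  have "traj \<omega> (length zs - 1) = zs"
    using assms take_traj[of "length zs - 1" n \<omega>] by (cases zs) auto
  then show ?thesis using traj_Suc[of \<omega> "length zs - 1"] assms(1) by (cases zs) auto
qed

text \<open>Almost surely the step after a prefix \<open>zs\<close> goes to a neighbour of \<open>last zs\<close>.\<close>

lemma measure_traj_pred_split:
  assumes zs: "zs \<noteq> []" "length zs \<le> n" and Q: "\<forall>ys. Q ys \<longrightarrow> take (length zs) ys = zs"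
  shows "measure M {\<omega> \<in> space M. Q (traj \<omega> n)}
    = measure M {\<omega> \<in> space M. Q (traj \<omega> n) \<and> X (length zs) \<omega> = last zs + 1}
    + measure M {\<omega> \<in> space M. Q (traj \<omega> n) \<and> X (length zs) \<omega> = last zs - 1}"
proof -
  define S1 where "S1 = {\<omega> \<in> space M. Q (traj \<omega> n) \<and> X (length zs) \<omega> = last zs + 1}"
  define S2 where "S2 = {\<omega> \<in> space M. Q (traj \<omega> n) \<and> X (length zs) \<omega> = last zs - 1}"
  define R where "R = {\<omega> \<in> space M. Q (traj \<omega> n) \<and> X (length zs) \<omega> \<noteq> last zs + 1 \<and> X (length zs) \<omega> \<noteq> last zs - 1}"
  have X_traj: "X (length zs) \<omega> = traj \<omega> n ! length zs" for \<omega>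
    using traj_nth[OF zs(2)] by simp
  have sets: "S1 \<in> sets M" "S2 \<in> sets M" "R \<in> sets M"
    unfolding S1_def S2_def R_def X_traj by (rule traj_pred_sets)+
  define Z where "Z = (\<Union>y\<in>{y. y \<noteq> last zs + 1 \<and> y \<noteq> last zs - 1}.
      {\<omega> \<in> space M. traj \<omega> (length zs) = zs @ [y]})"
  have "Z \<in> null_sets M"
    unfolding Z_def
  proof (rule null_sets_UN')
    fix y assume y: "y \<in> {y. y \<noteq> last zs + 1 \<and> y \<noteq> last zs - 1}"
    have "measure M {\<omega> \<in> space M. traj \<omega> (length zs) = zs @ [y]} = pp (zs @ [y])"
      using measure_traj_eq[of "zs @ [y]"] by simp
    also have "\<dots> = 0" using y zs by (simp add: path_prob_snoc step_prob_other)
    finally show "{\<omega> \<in> space M. traj \<omega> (length zs) = zs @ [y]} \<in> null_sets M"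
      by (intro null_setsI_measure traj_pred_sets)
  qed simp
  moreover have "R \<subseteq> Z"
  proof
    fix \<omega> assume "\<omega> \<in> R"
    then have "\<omega> \<in> space M" "traj \<omega> (length zs) = zs @ [X (length zs) \<omega>]"
      "X (length zs) \<omega> \<noteq> last zs + 1" "X (length zs) \<omega> \<noteq> last zs - 1"
      unfolding R_def using traj_prefix[OF zs] Q by auto
    then show "\<omega> \<in> Z" unfolding Z_def by blast
  qed
  ultimately have R: "R \<in> null_sets M" using null_sets_subset[OF _ sets(3)] by blast
  have "{\<omega> \<in> space M. Q (traj \<omega> n)} = (S1 \<union> S2) \<union> R"
    unfolding S1_def S2_def R_def by auto
  then have "measure M {\<omega> \<in> space M. Q (traj \<omega> n)} = measure M (S1 \<union> S2)"
    using measure_Un_null_set[OF sets.Un[OF sets(1,2)] R] by simp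
  also have "\<dots> = measure M S1 + measure M S2"
    by (rule finite_measure_Union[OF sets(1,2)]) (auto simp: S1_def S2_def)
  finally show ?thesis unfolding S1_def S2_def .
qed

lemma measure_traj_pred:
  "zs \<noteq> [] \<Longrightarrow> (\<forall>ys. Q ys \<longrightarrow> take (length zs) ys = zs) \<Longrightarrow>
   measure M {\<omega> \<in> space M. Q (traj \<omega> (length zs - 1 + n))} = nn_sum (\<lambda>ys. pp ys * of_bool (Q ys)) n zs"
proof (induction n arbitrary: zs Q)
  case 0
  have "Q (traj \<omega> (length zs - 1)) \<longleftrightarrow> traj \<omega> (length zs - 1) = zs \<and> Q zs" for \<omega>
    using 0 by (cases zs) auto
  then show ?case using measure_traj_eq[OF 0(1)] by simp
next
  case (Suc n)
  define x where "x = last zs"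
  define N where "N = length zs - 1 + Suc n"
  have lz: "length zs \<le> N" using Suc.prems(1) unfolding N_def by (cases zs) auto
  have step: "measure M {\<omega> \<in> space M. Q (traj \<omega> N) \<and> X (length zs) \<omega> = y}
      = nn_sum (\<lambda>ys. pp ys * of_bool (Q ys)) n (zs @ [y])" for y
  proof -
    define Q' where "Q' ys \<longleftrightarrow> Q ys \<and> take (Suc (length zs)) ys = zs @ [y]" for ys
    have "Q (traj \<omega> N) \<and> X (length zs) \<omega> = y \<longleftrightarrow> Q' (traj \<omega> N)" for \<omega>
      using traj_prefix[OF Suc.prems(1) lz, of \<omega>] Suc.prems(2) take_traj[OF lz, of \<omega>]
      unfolding Q'_def by auto
    moreover have "N = length (zs @ [y]) - 1 + n" unfolding N_def using Suc.prems(1) by (cases zs) auto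
    ultimately have "measure M {\<omega> \<in> space M. Q (traj \<omega> N) \<and> X (length zs) \<omega> = y}
        = nn_sum (\<lambda>ys. pp ys * of_bool (Q' ys)) n (zs @ [y])"
      using Suc.IH[of "zs @ [y]" Q'] by (simp add: Q'_def)
    also have "\<dots> = nn_sum (\<lambda>ys. pp ys * of_bool (Q ys)) n (zs @ [y])"
      by (rule nn_sum_cong) (auto simp: Q'_def nn_extension_def)
    finally show ?thesis .
  qed
  show ?case
    using measure_traj_pred_split[OF Suc.prems(1) lz Suc.prems(2)] step
    unfolding N_def by simp
qed

lemma wrong_start_null: "space M - {\<omega> \<in> space M. X 0 \<omega> = k} \<in> null_sets M"
proof -
  have S: "{\<omega> \<in> space M. X 0 \<omega> = k} \<in> sets M" by (rule X_pred_sets)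
  have "measure M {\<omega> \<in> space M. X 0 \<omega> = k} = 1"
    using measure_cylinder[of "[k]"] by (simp add: path_prob_singleton)
  then have "measure M (space M - {\<omega> \<in> space M. X 0 \<omega> = k}) = 0"
    using prob_compl[OF S] by simp
  then show ?thesis by (rule null_setsI_measure[OF sets.Diff[OF sets.top S]])
qed

lemma measure_traj_pred_start:
  "measure M {\<omega> \<in> space M. Q (traj \<omega> n)} = nn_sum (\<lambda>ys. pp ys * of_bool (Q ys)) n [k]"
proof -
  define Q' where "Q' ys \<longleftrightarrow> Q ys \<and> take 1 ys = [k]" for ys
  define B where "B = space M - {\<omega> \<in> space M. X 0 \<omega> = k}"
  have t1: "take (Suc 0) (traj \<omega> n) = [X 0 \<omega>]" for \<omega>
    using take_traj[of 0 n \<omega>] by (simp add: traj_def)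
  have eq: "{\<omega> \<in> space M. Q (traj \<omega> n)}
      = {\<omega> \<in> space M. Q' (traj \<omega> n)} \<union> (B \<inter> {\<omega> \<in> space M. Q (traj \<omega> n)})"
    unfolding B_def Q'_def using t1 by auto
  have null: "B \<inter> {\<omega> \<in> space M. Q (traj \<omega> n)} \<in> null_sets M"
    unfolding B_def by (rule null_set_Int2[OF wrong_start_null traj_pred_sets])
  have "measure M {\<omega> \<in> space M. Q (traj \<omega> n)} = measure M {\<omega> \<in> space M. Q' (traj \<omega> n)}"
    by (subst eq) (rule measure_Un_null_set[OF traj_pred_sets null])
  also have "\<dots> = nn_sum (\<lambda>ys. pp ys * of_bool (Q' ys)) n [k]"
    using measure_traj_pred[of "[k]" Q' n] by (simp add: Q'_def)
  also have "\<dots> = nn_sum (\<lambda>ys. pp ys * of_bool (Q ys)) n [k]"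
    by (rule nn_sum_cong) (auto simp: Q'_def nn_extension_def)
  finally show ?thesis .
qed

definition follow_above :: "int list \<Rightarrow> int \<Rightarrow> 'a set" where
  "follow_above s m = {\<omega> \<in> space M. (\<forall>i<length s. X i \<omega> = s ! i) \<and> (\<forall>t\<ge>length s. m < X t \<omega>)}"

definition follow_above_until :: "int list \<Rightarrow> int \<Rightarrow> nat \<Rightarrow> 'a set" where
  "follow_above_until s m n = {\<omega> \<in> space M. (\<forall>i<length s. X i \<omega> = s ! i) \<and>
     (\<forall>t. length s \<le> t \<longrightarrow> t \<le> length s + n \<longrightarrow> m < X t \<omega>)}"

lemma follow_above_sets: "follow_above s m \<in> sets M"
proof -
  have "follow_above s m
    = {\<omega> \<in> space M. \<forall>t. (t < length s \<longrightarrow> X t \<omega> = s ! t) \<and> (length s \<le> t \<longrightarrow> m < X t \<omega>)}"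
    unfolding follow_above_def by (simp only: all_conj_distrib)
  then show ?thesis using X_all_sets by simp
qed

lemma follow_above_until_sets: "follow_above_until s m n \<in> sets M"
proof -
  have "follow_above_until s m n = {\<omega> \<in> space M. \<forall>t. (t < length s \<longrightarrow> X t \<omega> = s ! t) \<and>
      (length s \<le> t \<longrightarrow> t \<le> length s + n \<longrightarrow> m < X t \<omega>)}"
    unfolding follow_above_until_def by (simp only: all_conj_distrib)
  then show ?thesis using X_all_sets by simp
qed

lemma all_nth_append_from_iff:
  "(\<forall>t. length s \<le> t \<longrightarrow> t < length (s @ r) \<longrightarrow> m < (s @ r) ! t) \<longleftrightarrow> (\<forall>e\<in>set r. m < e)"
proof
  assume h: "\<forall>t. length s \<le> t \<longrightarrow> t < length (s @ r) \<longrightarrow> m < (s @ r) ! t"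
  show "\<forall>e\<in>set r. m < e"
  proof
    fix e assume "e \<in> set r"
    then obtain i where "i < length r" "r ! i = e" by (auto simp: in_set_conv_nth)
    then show "m < e" using h[rule_format, of "length s + i"] by (simp add: nth_append)
  qed
next
  assume h: "\<forall>e\<in>set r. m < e"
  show "\<forall>t. length s \<le> t \<longrightarrow> t < length (s @ r) \<longrightarrow> m < (s @ r) ! t"
  proof (intro allI impI)
    fix t assume t: "length s \<le> t" "t < length (s @ r)"
    then have "(s @ r) ! t = r ! (t - length s)" "t - length s < length r"
      by (simp_all add: nth_append)
    then show "m < (s @ r) ! t" using h by (metis nth_mem)
  qed
qed

lemma measure_follow_above_until:
  assumes s: "s \<noteq> []"
  shows "measure M (follow_above_until s (last s) n)
    = nn_sum (\<lambda>r. pp (s @ r) * of_bool (\<forall>e\<in>set r. last s < e)) n [last s + 1]"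
proof -
  define m where "m = last s"
  define Q where "Q ys \<longleftrightarrow> take (length s) ys = s \<and> (\<forall>t. length s \<le> t \<longrightarrow> t < length ys \<longrightarrow> m < ys ! t)" for ys
  have ln: "length s - 1 + Suc n = length s + n" using s by (cases s) auto
  have "take (length s) (traj \<omega> (length s + n)) = s \<longleftrightarrow> (\<forall>i<length s. X i \<omega> = s ! i)" for \<omega>
    using take_traj[of "length s - 1" "length s + n" \<omega>] traj_eq_iff[of s "length s - 1" \<omega>] s
    by (cases s) auto
  then have "follow_above_until s m n = {\<omega> \<in> space M. Q (traj \<omega> (length s - 1 + Suc n))}"
    unfolding follow_above_until_def Q_def ln by (auto simp: traj_nth less_Suc_eq_le)
  also have "measure M \<dots> = nn_sum (\<lambda>ys. pp ys * of_bool (Q ys)) (Suc n) s"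
    by (rule measure_traj_pred[OF s]) (simp add: Q_def)
  also have "\<dots> = nn_sum (\<lambda>ys. pp ys * of_bool (Q ys)) n (s @ [m + 1])"
  proof -
    have "nn_sum (\<lambda>ys. pp ys * of_bool (Q ys)) n (s @ [m - 1]) = 0"
    proof (rule nn_sum_eq_0)
      fix ys assume e: "nn_extension (s @ [m - 1]) n ys"
      have "ys ! length s = m - 1" using nn_extension_nth[OF e, of "length s"] by simp
      moreover have "length s < length ys" using length_nn_extension[OF e] by simp
      ultimately show "pp ys * of_bool (Q ys) = 0" unfolding Q_def by force
    qed simp
    then show ?thesis by (simp add: m_def)
  qed
  also have "\<dots> = nn_sum (\<lambda>r. pp (s @ r) * of_bool (Q (s @ r))) n [m + 1]"
    by (rule nn_sum_append) simp
  also have "\<dots> = nn_sum (\<lambda>r. pp (s @ r) * of_bool (\<forall>e\<in>set r. m < e)) n [m + 1]"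
    unfolding Q_def all_nth_append_from_iff by simp
  finally show ?thesis unfolding m_def .
qed

lemma follow_above_until_tendsto:
  "(\<lambda>n. measure M (follow_above_until s m n)) \<longlonglongrightarrow> measure M (follow_above s m)"
proof -
  have "(\<Inter>n. follow_above_until s m n) = follow_above s m"
  proof (intro set_eqI iffI)
    fix \<omega> assume h: "\<omega> \<in> (\<Inter>n. follow_above_until s m n)"
    then have h': "\<omega> \<in> follow_above_until s m (t - length s)" for t by blast
    have "m < X t \<omega>" if "length s \<le> t" for t
      using h'[of t] that unfolding follow_above_until_def by auto
    then show "\<omega> \<in> follow_above s m"
      using h'[of 0] unfolding follow_above_until_def follow_above_def by auto
  qed (simp add: follow_above_until_def follow_above_def)
  moreover have "decseq (follow_above_until s m)"
    unfolding decseq_def follow_above_until_def by auto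
  then have "(\<lambda>n. measure M (follow_above_until s m n)) \<longlonglongrightarrow> measure M (\<Inter>n. follow_above_until s m n)"
    by (intro finite_Lim_measure_decseq) (auto simp: image_subset_iff follow_above_until_sets)
  ultimately show ?thesis by simp
qed

end

lemma follow_above_transfer:
  assumes A: "grrw_walk f w k1 M X" and B: "grrw_walk f w k2 N Y"
    and u: "u \<noteq> []" and pm: "\<forall>e\<in>set p. e \<le> last u" and qm: "\<forall>e\<in>set q. e \<le> last u"
  shows "measure N (grrw_walk.follow_above N Y (q @ u) (last u)) * path_prob f w k1 (p @ u @ [last u + 1])
       = measure M (grrw_walk.follow_above M X (p @ u) (last u)) * path_prob f w k2 (q @ u @ [last u + 1])"
proof -
  interpret A: grrw_walk f w k1 M X by (rule A)
  interpret B: grrw_walk f w k2 N Y by (rule B)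
  define m where "m = last u"
  define a1 where "a1 = path_prob f w k1 (p @ u @ [m + 1])"
  define a2 where "a2 = path_prob f w k2 (q @ u @ [m + 1])"
  have cross: "a1 * (path_prob f w k2 ((q @ u) @ r) * of_bool (\<forall>e\<in>set r. m < e))
      = a2 * (path_prob f w k1 ((p @ u) @ r) * of_bool (\<forall>e\<in>set r. m < e))"
    if "nn_extension [m + 1] n r" for n r
  proof (cases "\<forall>e\<in>set r. m < e")
    case True
    have "r \<noteq> []" using length_nn_extension[OF that] by auto
    then show ?thesis
      using True path_prob_cross_identity[OF A.valid_w u pm qm, where f = f and r = r and kp = k1 and kq = k2]
      unfolding a1_def a2_def m_def by (simp add: mult.commute)
  qed simp
  have same: "measure N (B.follow_above_until (q @ u) m n) * a1
      = measure M (A.follow_above_until (p @ u) m n) * a2" for n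
  proof -
    have "measure N (B.follow_above_until (q @ u) m n) * a1
        = nn_sum (\<lambda>r. a1 * (path_prob f w k2 ((q @ u) @ r) * of_bool (\<forall>e\<in>set r. m < e))) n [m + 1]"
      using B.measure_follow_above_until[of "q @ u" n] u
      by (simp add: m_def nn_sum_cmult mult.commute)
    also have "\<dots> = nn_sum (\<lambda>r. a2 * (path_prob f w k1 ((p @ u) @ r) * of_bool (\<forall>e\<in>set r. m < e))) n [m + 1]"
      by (rule nn_sum_cong[OF _ cross]) simp_all
    also have "\<dots> = measure M (A.follow_above_until (p @ u) m n) * a2"
      using A.measure_follow_above_until[of "p @ u" n] u
      by (simp add: m_def nn_sum_cmult mult.commute)
    finally show ?thesis .
  qed
  have "(\<lambda>n. measure N (B.follow_above_until (q @ u) m n) * a1)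
      \<longlonglongrightarrow> measure N (B.follow_above (q @ u) m) * a1"
    by (rule tendsto_mult_right[OF B.follow_above_until_tendsto])
  then have "(\<lambda>n. measure M (A.follow_above_until (p @ u) m n) * a2)
      \<longlonglongrightarrow> measure N (B.follow_above (q @ u) m) * a1"
    unfolding same .
  moreover have "(\<lambda>n. measure M (A.follow_above_until (p @ u) m n) * a2)
      \<longlonglongrightarrow> measure M (A.follow_above (p @ u) m) * a2"
    by (rule tendsto_mult_right[OF A.follow_above_until_tendsto])
  ultimately show ?thesis unfolding a1_def a2_def m_def by (rule LIMSEQ_unique)
qed

section \<open>Nearest-neighbour integer sequences\<close>

lemma nn_seq_intermediate_value:
  fixes x :: "nat \<Rightarrow> int"
  assumes st: "\<forall>i. \<bar>x (Suc i) - x i\<bar> \<le> 1"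
  shows "i \<le> j \<Longrightarrow> x i \<le> v \<Longrightarrow> v \<le> x j \<Longrightarrow> \<exists>t. i \<le> t \<and> t \<le> j \<and> x t = v"
proof (induction j)
  case (Suc j)
  show ?case
  proof (cases "i = Suc j")
    case True then show ?thesis using Suc.prems by auto
  next
    case False
    then have ij: "i \<le> j" using Suc.prems by simp
    show ?thesis
    proof (cases "v \<le> x j")
      case True
      then obtain t where "i \<le> t" "t \<le> j" "x t = v" using Suc.IH ij Suc.prems by blast
      then show ?thesis by (intro exI[of _ t]) auto
    next
      case False
      then have "v = x (Suc j)" using Suc.prems st[rule_format, of j] by linarith
      then show ?thesis using ij by (intro exI[of _ "Suc j"]) auto
    qed
  qed
qed auto

lemma nn_seq_last_visit:
  fixes x :: "nat \<Rightarrow> int"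
  assumes st: "\<forall>i. \<bar>x (Suc i) - x i\<bar> \<le> 1" and "x i \<le> v" and lim: "\<forall>Z. \<exists>T. \<forall>t\<ge>T. Z \<le> x t"
  obtains \<tau> where "i \<le> \<tau>" "x \<tau> = v" "\<forall>t>\<tau>. v < x t"
proof -
  obtain T where T: "\<forall>t\<ge>T. v + 1 \<le> x t" using lim by blast
  define K where "K = {t. i \<le> t \<and> x t = v}"
  have "K \<subseteq> {..<T}" unfolding K_def using T by (auto simp: not_less[symmetric])
  then have Kfin: "finite K" using finite_subset by blast
  have "v \<le> x (max i T)" using T[rule_format, of "max i T"] by simp
  then obtain t1 where "i \<le> t1" "x t1 = v"
    using nn_seq_intermediate_value[OF st, of i "max i T" v] assms(2) by auto
  then have Kne: "K \<noteq> {}" unfolding K_def by auto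
  define \<tau> where "\<tau> = Max K"
  have \<tau>K: "\<tau> \<in> K" unfolding \<tau>_def using Kfin Kne by simp
  have "v < x t" if "\<tau> < t" for t
  proof (rule ccontr)
    assume "\<not> v < x t"
    moreover have "v \<le> x (max t T)" using T[rule_format, of "max t T"] by simp
    ultimately obtain t' where t': "t \<le> t'" "x t' = v"
      using nn_seq_intermediate_value[OF st, of t "max t T" v] by auto
    then have "t' \<in> K" using \<tau>K that unfolding K_def by simp
    then have "t' \<le> \<tau>" unfolding \<tau>_def using Kfin by simp
    then show False using t' that by simp
  qed
  then show ?thesis using that \<tau>K unfolding K_def by blast
qed

text \<open>For a walk escaping to \<open>+\<infinity>\<close>: \<open>\<tau>\<close> is the last visit to \<open>v\<close> and \<open>\<sigma>\<close> the last visit to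
  the maximum of the walk up to time \<open>\<tau>\<close>.\<close>

lemma nn_seq_escape_decomposition:
  fixes x :: "nat \<Rightarrow> int"
  assumes st: "\<forall>i. \<bar>x (Suc i) - x i\<bar> = 1" and "x 0 \<le> v" and lim: "\<forall>Z. \<exists>T. \<forall>t\<ge>T. Z \<le> x t"
  shows "\<exists>\<tau> \<sigma>. \<tau> \<le> \<sigma> \<and> x \<tau> = v \<and> (\<forall>i>\<tau>. v < x i) \<and> (\<forall>i\<le>\<tau>. x i \<le> x \<sigma>) \<and> (\<forall>t>\<sigma>. x \<sigma> < x t)"
proof -
  have st': "\<forall>i. \<bar>x (Suc i) - x i\<bar> \<le> 1" using st by simp
  obtain \<tau> where \<tau>: "x \<tau> = v" "\<forall>t>\<tau>. v < x t"
    using nn_seq_last_visit[OF st' assms(2) lim] by blast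
  define m where "m = Max (x ` {..\<tau>})"
  have m: "x i \<le> m" if "i \<le> \<tau>" for i unfolding m_def using that by simp
  have "m \<in> x ` {..\<tau>}" unfolding m_def by (rule Max_in) auto
  then obtain j where "j \<le> \<tau>" "x j = m" by auto
  then obtain \<sigma> where "j \<le> \<sigma>" "x \<sigma> = m" "\<forall>t>\<sigma>. m < x t"
    using nn_seq_last_visit[OF st' _ lim, of j m] by auto
  moreover have "\<tau> \<le> \<sigma>"
  proof (rule ccontr)
    assume "\<not> \<tau> \<le> \<sigma>"
    then have "m < x \<tau>" using calculation by simp
    then show False using m[of \<tau>] by simp
  qed
  ultimately show ?thesis using \<tau> m by (intro exI[of _ \<tau>] exI[of _ \<sigma>]) auto
qed

lemma C3_on_unit_continuous:
  assumes "C3_on_unit f"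
  shows "continuous_on {0..1} f"
proof -
  obtain D where D0: "D 0 = f"
    and d: "\<forall>i<3. \<forall>x\<in>{0..1}. (D i has_real_derivative D (Suc i) x) (at x within {0..1})"
    using assms unfolding C3_on_unit_def by blast
  have "continuous (at x within {0..1}) f" if "x \<in> {0..1}" for x
    using d[rule_format, of 0 x] that D0 DERIV_continuous by fastforce
  then show ?thesis by (simp add: continuous_on_eq_continuous_within)
qed

lemma continuous_on_unit_bounded_away:
  fixes f :: "real \<Rightarrow> real"
  assumes "continuous_on {0..1} f" "\<forall>x\<in>{0..1}. 0 < f x \<and> f x < 1"
  obtains c where "0 < c" "\<forall>x\<in>{0..1::real}. c \<le> f x \<and> c \<le> 1 - f x"
proof -
  have cont: "continuous_on {0..1} (\<lambda>x. min (f x) (1 - f x))"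
    by (intro continuous_on_min continuous_on_diff continuous_on_const assms(1))
  obtain x0 where x0: "x0 \<in> {0..1::real}"
    "\<forall>y\<in>{0..1}. min (f x0) (1 - f x0) \<le> min (f y) (1 - f y)"
    using continuous_attains_inf[OF compact_Icc _ cont] by auto
  show ?thesis by (rule that[of "min (f x0) (1 - f x0)"]) (use x0 assms(2) in auto)
qed

section \<open>Walks staying above a level escape\<close>

text \<open>\<open>low_visits L D ys t0 j\<close>: from time \<open>t0\<close> on, \<open>ys\<close> is at least \<open>j\<close> times at a height \<open>\<le> L\<close>,
  at times at least \<open>D\<close> apart.\<close>

fun low_visits :: "int \<Rightarrow> nat \<Rightarrow> int list \<Rightarrow> nat \<Rightarrow> nat \<Rightarrow> bool" where
  "low_visits L D ys t0 0 = True"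
| "low_visits L D ys t0 (Suc j) =
     (\<exists>t. t0 \<le> t \<and> t + D < length ys \<and> ys ! t \<le> L \<and> low_visits L D ys (t + D) j)"

definition stays_above :: "int \<Rightarrow> int list \<Rightarrow> nat \<Rightarrow> bool" where
  "stays_above a ys t0 \<longleftrightarrow> (\<forall>t. t0 \<le> t \<longrightarrow> t < length ys \<longrightarrow> a < ys ! t)"

lemma low_visits_mono: "low_visits L D ys t1 j \<Longrightarrow> t0 \<le> t1 \<Longrightarrow> low_visits L D ys t0 j"
proof (cases j)
  case (Suc j')
  assume "low_visits L D ys t1 j" "t0 \<le> t1"
  then obtain t where "t1 \<le> t" "t + D < length ys" "ys ! t \<le> L" "low_visits L D ys (t + D) j'"
    using Suc by auto
  then show ?thesis using Suc \<open>t0 \<le> t1\<close> by (auto intro!: exI[of _ t])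
qed simp

lemma low_visits_append: "low_visits L D ys t0 j \<Longrightarrow> low_visits L D (ys @ zs) t0 j"
proof (induction j arbitrary: t0)
  case (Suc j)
  then obtain t where "t0 \<le> t" "t + D < length ys" "ys ! t \<le> L" "low_visits L D ys (t + D) j" by auto
  then show ?case using Suc.IH[of "t + D"] by (auto simp: nth_append intro!: exI[of _ t])
qed simp

lemma low_visits_Suc_skip:
  assumes "L < ys ! T"
  shows "low_visits L D ys T (Suc j) \<longleftrightarrow> low_visits L D ys (Suc T) (Suc j)"
proof
  assume "low_visits L D ys T (Suc j)"
  then obtain t where t: "T \<le> t" "t + D < length ys" "ys ! t \<le> L" "low_visits L D ys (t + D) j"
    by auto
  then have "Suc T \<le> t" using assms by (metis le_neq_implies_less not_le Suc_leI)
  then show "low_visits L D ys (Suc T) (Suc j)" using t by auto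
next
  assume "low_visits L D ys (Suc T) (Suc j)"
  then show "low_visits L D ys T (Suc j)" by (rule low_visits_mono) simp
qed

lemma low_visits_here:
  assumes "T + D < length ys" "ys ! T \<le> L"
  shows "low_visits L D ys T (Suc j) \<longleftrightarrow> low_visits L D ys (T + D) j"
proof
  assume "low_visits L D ys T (Suc j)"
  then obtain t where "T \<le> t" "low_visits L D ys (t + D) j" by auto
  then show "low_visits L D ys (T + D) j" by (rule_tac low_visits_mono) auto
qed (use assms in auto)

lemma stays_above_split:
  assumes "T \<le> S" "S < length ws" "length ws \<le> length ys" "\<forall>i<length ws. ys ! i = ws ! i"
  shows "stays_above a ys T \<longleftrightarrow> stays_above a ws T \<and> stays_above a ys S"
proof
  assume h: "stays_above a ys T"
  show "stays_above a ws T \<and> stays_above a ys S"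
    unfolding stays_above_def
  proof (intro conjI allI impI)
    fix t assume "T \<le> t" "t < length ws"
    then show "a < ws ! t" using h assms unfolding stays_above_def by (metis less_le_trans)
  next
    fix t assume "S \<le> t" "t < length ys"
    then show "a < ys ! t" using h assms unfolding stays_above_def by (meson le_trans)
  qed
next
  assume h: "stays_above a ws T \<and> stays_above a ys S"
  show "stays_above a ys T" unfolding stays_above_def
  proof (intro allI impI)
    fix t assume t: "T \<le> t" "t < length ys"
    show "a < ys ! t"
    proof (cases "t < S")
      case True
      then show ?thesis using h t assms unfolding stays_above_def by (metis less_trans)
    qed (use h t in \<open>simp add: stays_above_def\<close>)
  qed
qed

lemma stays_above_Suc: "a < ys ! T \<Longrightarrow> stays_above a ys T \<longleftrightarrow> stays_above a ys (Suc T)"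
  unfolding stays_above_def by (metis Suc_leD le_antisym not_less_eq_eq)

context grrw_walk
begin

lemma low_visits_traj_mono:
  assumes "n1 \<le> n" "low_visits L D (traj \<omega> n1) t0 j"
  shows "low_visits L D (traj \<omega> n) t0 j"
proof -
  have "traj \<omega> n = traj \<omega> n1 @ drop (Suc n1) (traj \<omega> n)"
    using take_traj[OF assms(1), of \<omega>] by (metis append_take_drop_id)
  then show ?thesis using low_visits_append[OF assms(2)] by metis
qed

lemma low_visits_traj_exists:
  assumes "\<forall>T. \<exists>t\<ge>T. X t \<omega> \<le> L"
  shows "\<exists>n. low_visits L D (traj \<omega> n) t0 j"
proof (induction j arbitrary: t0)
  case (Suc j)
  obtain t where t: "t \<ge> t0" "X t \<omega> \<le> L" using assms by blast
  obtain n1 where n1: "low_visits L D (traj \<omega> n1) (t + D) j" using Suc.IH by blast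
  define n where "n = max n1 (t + D)"
  have "low_visits L D (traj \<omega> n) (t + D) j" using low_visits_traj_mono[OF _ n1, of n] n_def by simp
  moreover have "t + D < length (traj \<omega> n)" "traj \<omega> n ! t \<le> L"
    using t traj_nth[of t n \<omega>] unfolding n_def by simp_all
  ultimately show ?case using t(1) by auto
qed simp

lemma escape_sets: "{\<omega> \<in> space M. filterlim (\<lambda>n. X n \<omega>) at_top sequentially} \<in> sets M"
proof -
  have "{\<omega> \<in> space M. filterlim (\<lambda>n. X n \<omega>) at_top sequentially}
     = space M \<inter> (\<Inter>Z::int. \<Union>T::nat. {\<omega> \<in> space M. \<forall>t. T \<le> t \<longrightarrow> Z \<le> X t \<omega>})"
    unfolding filterlim_at_top eventually_sequentially by blast
  also have "\<dots> \<in> sets M"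
  proof (intro sets.Int sets.top sets.countable_INT sets.countable_UN image_subsetI)
    fix Z :: int and T :: nat
    show "{\<omega> \<in> space M. \<forall>t. T \<le> t \<longrightarrow> Z \<le> X t \<omega>} \<in> sets M"
      by (rule X_all_sets)
  qed simp
  finally show ?thesis .
qed

end

locale grrw_walk_bounded = grrw_walk +
  fixes c :: real
  assumes c_pos: "0 < c" and c_bound: "\<forall>x\<in>{0..1}. c \<le> f x \<and> c \<le> 1 - f x"
begin

lemma c_le_1: "c \<le> 1"
  using c_bound f_bounds by fastforce

lemma survival_factor_nonneg: "0 \<le> 1 - c ^ D"
  using c_pos c_le_1 by (simp add: power_le_one)

definition low_survival :: "int \<Rightarrow> int \<Rightarrow> nat \<Rightarrow> nat \<Rightarrow> nat \<Rightarrow> int list \<Rightarrow> real" where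
  "low_survival a L t0 j n zs =
     nn_sum (\<lambda>ys. pp ys * of_bool (stays_above a ys t0 \<and> low_visits L (nat (L - a)) ys t0 j)) n zs"

text \<open>Falling straight down \<open>D\<close> steps from a height \<open>\<le> a + D\<close> ends at most at \<open>a\<close>.\<close>

lemma nn_sum_stays_above_le:
  assumes zs: "zs \<noteq> []" and x: "a < last zs" "last zs \<le> a + int D"
  shows "nn_sum (\<lambda>ws. pp ws * of_bool (stays_above a ws (length zs - 1))) D zs \<le> (1 - c ^ D) * pp zs"
proof -
  define T where "T = length zs - 1"
  have total: "nn_sum (\<lambda>ws. pp ws * of_bool (stays_above a ws T)) D zs
      + nn_sum (\<lambda>ws. pp ws * of_bool (\<not> stays_above a ws T)) D zs = pp zs"
    by (subst nn_sum_add[symmetric], subst nn_sum_cong[OF zs, of _ _ pp])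
      (simp_all add: of_bool_def nn_sum_path_prob[OF zs])
  have "\<not> stays_above a (down_path zs D) T"
  proof
    assume "stays_above a (down_path zs D) T"
    moreover have "T \<le> length (down_path zs D) - 1" "length (down_path zs D) - 1 < length (down_path zs D)"
      unfolding T_def length_down_path using zs by (cases zs, auto)+
    ultimately have "a < down_path zs D ! (length (down_path zs D) - 1)" unfolding stays_above_def by blast
    moreover have "down_path zs D \<noteq> []" using length_down_path[of zs D] zs by auto
    ultimately have "a < last (down_path zs D)" by (simp add: last_conv_nth)
    then show False using last_down_path[OF zs] x by simp
  qed
  then have "c ^ D * pp zs \<le> pp (down_path zs D) * of_bool (\<not> stays_above a (down_path zs D) T)"
    using path_prob_down_path_ge[OF valid_w c_bound _ f_bounds zs] c_pos by simp
  also have "\<dots> \<le> nn_sum (\<lambda>ws. pp ws * of_bool (\<not> stays_above a ws T)) D zs"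
    by (rule nn_sum_ge_down_path) (simp add: pp_nonneg)
  finally show ?thesis using total unfolding T_def by (simp add: algebra_simps)
qed

text \<open>One low visit at the current time: the next \<open>D = L - a\<close> steps kill the walk with
  probability \<open>\<ge> c ^ D\<close>, and then the remaining visits are counted from time \<open>T + D\<close>.\<close>

lemma low_survival_visit_now:
  assumes zs: "length zs = Suc T" and x: "a < last zs" "last zs \<le> L" and D: "D = nat (L - a)"
    and IH: "\<And>ws. nn_extension zs D ws \<Longrightarrow> low_survival a L (T + D) j d ws \<le> (1 - c ^ D) ^ j * pp ws"
  shows "low_survival a L T (Suc j) (D + d) zs \<le> (1 - c ^ D) ^ Suc j * pp zs"
proof -
  have zne: "zs \<noteq> []" using zs by auto
  have inner: "nn_sum (\<lambda>ys. pp ys * of_bool (stays_above a ys T \<and> low_visits L D ys T (Suc j))) d ws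
      \<le> (1 - c ^ D) ^ j * (pp ws * of_bool (stays_above a ws T))" if ew: "nn_extension zs D ws" for ws
  proof -
    have lws: "length ws = T + D + 1" using length_nn_extension[OF ew] zs by simp
    have "nn_sum (\<lambda>ys. pp ys * of_bool (stays_above a ys T \<and> low_visits L D ys T (Suc j))) d ws
      = nn_sum (\<lambda>ys. of_bool (stays_above a ws T) *
          (pp ys * of_bool (stays_above a ys (T + D) \<and> low_visits L D ys (T + D) j))) d ws"
    proof (rule nn_sum_cong)
      fix ys assume e: "nn_extension ws d ys"
      have lys: "length ys = T + D + 1 + d" using length_nn_extension[OF e] lws by simp
      have eq: "\<forall>i<length ws. ys ! i = ws ! i" using nn_extension_nth[OF e] by blast
      have "ys ! T = last zs"
        using eq nn_extension_nth[OF ew, of T] zs lws by (simp add: last_conv_nth zne)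
      then have "low_visits L D ys T (Suc j) \<longleftrightarrow> low_visits L D ys (T + D) j"
        using lys x by (intro low_visits_here) auto
      moreover have "stays_above a ys T \<longleftrightarrow> stays_above a ws T \<and> stays_above a ys (T + D)"
        by (rule stays_above_split) (use lws lys eq in auto)
      ultimately show "pp ys * of_bool (stays_above a ys T \<and> low_visits L D ys T (Suc j))
          = of_bool (stays_above a ws T) *
            (pp ys * of_bool (stays_above a ys (T + D) \<and> low_visits L D ys (T + D) j))"
        by auto
    qed (use lws in auto)
    also have "\<dots> \<le> of_bool (stays_above a ws T) * ((1 - c ^ D) ^ j * pp ws)"
      unfolding nn_sum_cmult using IH[OF ew] unfolding low_survival_def D
      by (intro mult_left_mono) auto
    finally show ?thesis by (simp add: ac_simps)
  qed
  have "low_survival a L T (Suc j) (D + d) zs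
      = nn_sum (\<lambda>ws. nn_sum (\<lambda>ys. pp ys * of_bool (stays_above a ys T \<and> low_visits L D ys T (Suc j))) d ws) D zs"
    unfolding low_survival_def D by (rule nn_sum_add_steps)
  also have "\<dots> \<le> nn_sum (\<lambda>ws. (1 - c ^ D) ^ j * (pp ws * of_bool (stays_above a ws T))) D zs"
    by (rule nn_sum_mono[OF zne inner])
  also have "\<dots> \<le> (1 - c ^ D) ^ j * ((1 - c ^ D) * pp zs)"
    unfolding nn_sum_cmult using nn_sum_stays_above_le[OF zne x(1), of D] x D zs survival_factor_nonneg
    by (intro mult_left_mono) auto
  finally show ?thesis by (simp add: ac_simps)
qed

lemma low_survival_Suc_le:
  assumes "zs \<noteq> []" "\<And>y. low_survival a L t0 j n (zs @ [y]) \<le> C * pp (zs @ [y])"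
  shows "low_survival a L t0 j (Suc n) zs \<le> C * pp zs"
  using nn_sum_le_path_prob_Suc[OF assms(1)] assms(2) unfolding low_survival_def by blast

lemma low_survival_eq_0:
  assumes "zs \<noteq> []"
    and "\<And>ys. nn_extension zs n ys \<Longrightarrow> \<not> (stays_above a ys t0 \<and> low_visits L (nat (L - a)) ys t0 j)"
  shows "low_survival a L t0 j n zs = 0"
  unfolding low_survival_def using assms by (intro nn_sum_eq_0) auto

lemma low_survival_bound_now:
  assumes aL: "a < L" and D: "D = nat (L - a)" and zs: "length zs = Suc T" and n: "0 < n"
    and IH: "\<And>m ys t1 i. m < n \<Longrightarrow> ys \<noteq> [] \<Longrightarrow> length ys - 1 \<le> t1 \<Longrightarrow>
      low_survival a L t1 i m ys \<le> (1 - c ^ D) ^ i * pp ys"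
  shows "low_survival a L T (Suc j) n zs \<le> (1 - c ^ D) ^ Suc j * pp zs"
proof -
  have zne: "zs \<noteq> []" using zs by auto
  have D1: "1 \<le> D" using aL D by simp
  have q0: "0 \<le> (1 - c ^ D) ^ Suc j * pp zs"
    using survival_factor_nonneg pp_nonneg by simp
  have ysT: "ys ! T = last zs" "T < length ys" if "nn_extension zs m ys" for m ys
    using nn_extension_nth[OF that, of T] length_nn_extension[OF that] zs
    by (simp_all add: last_conv_nth zne)
  consider (below) "last zs \<le> a" | (high) "L < last zs" | (mid) "a < last zs" "last zs \<le> L"
    by linarith
  then show ?thesis
  proof cases
    case below
    have "low_survival a L T (Suc j) n zs = 0"
      by (rule low_survival_eq_0[OF zne]) (use ysT below in \<open>force simp: stays_above_def\<close>)
    then show ?thesis using q0 by simp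
  next
    case high
    obtain m where m: "n = Suc m" using n gr0_implies_Suc by blast
    have "low_survival a L T (Suc j) n zs = low_survival a L (Suc T) (Suc j) n zs"
      unfolding low_survival_def
    proof (rule nn_sum_cong[OF zne])
      fix ys assume e: "nn_extension zs n ys"
      have "stays_above a ys T \<longleftrightarrow> stays_above a ys (Suc T)"
        by (rule stays_above_Suc) (use ysT[OF e] high aL in simp)
      moreover have "low_visits L D ys T (Suc j) \<longleftrightarrow> low_visits L D ys (Suc T) (Suc j)"
        by (rule low_visits_Suc_skip) (use ysT[OF e] high in simp)
      ultimately show "pp ys * of_bool (stays_above a ys T \<and> low_visits L (nat (L - a)) ys T (Suc j))
        = pp ys * of_bool (stays_above a ys (Suc T) \<and> low_visits L (nat (L - a)) ys (Suc T) (Suc j))"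
        using D by simp
    qed
    also have "\<dots> \<le> (1 - c ^ D) ^ Suc j * pp zs"
      unfolding m by (rule low_survival_Suc_le[OF zne]) (rule IH, use m zs in auto)
    finally show ?thesis .
  next
    case mid
    show ?thesis
    proof (cases "n < D")
      case True
      have "low_survival a L T (Suc j) n zs = 0"
        by (rule low_survival_eq_0[OF zne]) (use length_nn_extension zs True D in auto)
      then show ?thesis using q0 by simp
    next
      case False
      then obtain d where d: "n = D + d" using le_Suc_ex not_less by blast
      have "low_survival a L (T + D) j d ws \<le> (1 - c ^ D) ^ j * pp ws"
        if "nn_extension zs D ws" for ws
        using length_nn_extension[OF that] zs d D1 by (intro IH) auto
      then show ?thesis unfolding d by (rule low_survival_visit_now[OF zs mid D])
    qed
  qed
qed

lemma low_survival_bound: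
  assumes aL: "a < L" and D: "D = nat (L - a)"
  shows "zs \<noteq> [] \<Longrightarrow> length zs - 1 \<le> t0 \<Longrightarrow>
    low_survival a L t0 j n zs \<le> (1 - c ^ D) ^ j * pp zs"
proof (induction n arbitrary: zs t0 j rule: less_induct)
  case (less n)
  consider (none) "j = 0" | (empty) j' where "j = Suc j'" "n = 0"
    | (after) "0 < n" "length zs \<le> t0" | (now) j' where "j = Suc j'" "0 < n" "t0 = length zs - 1"
    using less.prems by (cases j) force+
  then show ?case
  proof cases
    case none
    have "low_survival a L t0 j n zs \<le> nn_sum pp n zs"
      unfolding low_survival_def by (rule nn_sum_mono[OF less.prems(1)]) (simp add: pp_nonneg)
    then show ?thesis using none nn_sum_path_prob[OF less.prems(1)] by simp
  next
    case empty
    then have "\<not> low_visits L D zs t0 j" using less.prems(2) aL D by auto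
    then show ?thesis using empty survival_factor_nonneg pp_nonneg D
      by (simp add: low_survival_def del: low_visits.simps)
  next
    case after
    then obtain m where m: "n = Suc m" using gr0_implies_Suc by blast
    show ?thesis unfolding m
      by (rule low_survival_Suc_le[OF less.prems(1)]) (rule less.IH, use m after in auto)
  next
    case now
    have "length zs = Suc t0" using less.prems(1) now by (cases zs) auto
    then show ?thesis unfolding now(1)
      by (rule low_survival_bound_now[OF aL D _ now(2)]) (rule less.IH, auto)
  qed
qed

lemma stays_above_recurrent_AE:
  assumes aL: "a < L"
  shows "AE \<omega> in M. (\<forall>t\<ge>t0. a < X t \<omega>) \<longrightarrow> \<not> (\<forall>T. \<exists>t\<ge>T. X t \<omega> \<le> L)"
proof -
  define D where "D = nat (L - a)"
  define q where "q = 1 - c ^ D"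
  have q: "0 \<le> q" "q < 1" unfolding q_def using survival_factor_nonneg c_pos by simp_all
  define A0 where "A0 = {\<omega> \<in> space M. \<forall>t. t0 \<le> t \<longrightarrow> a < X t \<omega>}"
  define B where "B j n = A0 \<inter> {\<omega> \<in> space M. low_visits L D (traj \<omega> n) t0 j}" for j n
  have Bs: "B j n \<in> sets M" for j n
    unfolding B_def A0_def using X_all_sets traj_pred_sets by (rule sets.Int)
  have Bm: "measure M (B j n) \<le> q ^ j" for j n
  proof -
    have "B j n \<subseteq> {\<omega> \<in> space M. stays_above a (traj \<omega> n) t0 \<and> low_visits L D (traj \<omega> n) t0 j}"
      unfolding B_def A0_def stays_above_def by (auto simp: traj_nth)
    then have "measure M (B j n)
        \<le> measure M {\<omega> \<in> space M. stays_above a (traj \<omega> n) t0 \<and> low_visits L D (traj \<omega> n) t0 j}"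
      by (intro finite_measure_mono traj_pred_sets)
    also have "\<dots> = nn_sum (\<lambda>ys. pp ys * of_bool (stays_above a ys t0 \<and> low_visits L D ys t0 j)) n [k]"
      by (rule measure_traj_pred_start)
    also have "\<dots> = low_survival a L t0 j n [k]"
      unfolding low_survival_def D_def ..
    also have "\<dots> \<le> q ^ j * pp [k]"
      unfolding q_def by (rule low_survival_bound[OF aL D_def]) auto
    finally show ?thesis by (simp add: path_prob_singleton)
  qed
  have Ubound: "measure M (\<Union>n. B j n) \<le> q ^ j" for j
  proof (rule LIMSEQ_le_const2)
    have "incseq (B j)"
      unfolding incseq_def B_def using low_visits_traj_mono by blast
    then show "(\<lambda>n. measure M (B j n)) \<longlonglongrightarrow> measure M (\<Union>n. B j n)"
      using Bs by (intro finite_Lim_measure_incseq) auto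
  qed (use Bm in blast)
  define Z where "Z = (\<Inter>j. \<Union>n. B j n)"
  have Zs: "Z \<in> sets M" unfolding Z_def using Bs by auto
  have "measure M Z \<le> q ^ j" for j
  proof -
    have "measure M Z \<le> measure M (\<Union>n. B j n)"
      using Bs unfolding Z_def by (intro finite_measure_mono) auto
    then show ?thesis using Ubound[of j] by linarith
  qed
  moreover have "(\<lambda>j. q ^ j) \<longlonglongrightarrow> 0" using q by (intro LIMSEQ_power_zero) simp
  ultimately have "measure M Z \<le> 0" by (intro LIMSEQ_le_const) auto
  then have "Z \<in> null_sets M"
    using Zs measure_nonneg[of M Z] by (intro null_setsI_measure) simp_all
  moreover have "{\<omega> \<in> space M. \<not> ((\<forall>t\<ge>t0. a < X t \<omega>) \<longrightarrow> \<not> (\<forall>T. \<exists>t\<ge>T. X t \<omega> \<le> L))} \<subseteq> Z"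
  proof
    fix \<omega> assume "\<omega> \<in> {\<omega> \<in> space M. \<not> ((\<forall>t\<ge>t0. a < X t \<omega>) \<longrightarrow> \<not> (\<forall>T. \<exists>t\<ge>T. X t \<omega> \<le> L))}"
    then have "\<omega> \<in> A0" and low: "\<forall>T. \<exists>t\<ge>T. X t \<omega> \<le> L" unfolding A0_def by auto
    have "\<omega> \<in> (\<Union>n. B j n)" for j
    proof -
      obtain n where "low_visits L D (traj \<omega> n) t0 j" using low_visits_traj_exists[OF low] by blast
      then have "\<omega> \<in> B j n" unfolding B_def using \<open>\<omega> \<in> A0\<close> A0_def by simp
      then show ?thesis by blast
    qed
    then show "\<omega> \<in> Z" unfolding Z_def by blast
  qed
  ultimately show ?thesis by (rule AE_I')
qed

lemma stays_above_escapes_AE: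
  "AE \<omega> in M. (\<forall>t\<ge>t0. a < X t \<omega>) \<longrightarrow> filterlim (\<lambda>n. X n \<omega>) at_top sequentially"
proof -
  have "countable {L::int. a < L}" by (rule countableI_type)
  then have "AE \<omega> in M. \<forall>L\<in>{L. a < L}. (\<forall>t\<ge>t0. a < X t \<omega>) \<longrightarrow> \<not> (\<forall>T. \<exists>t\<ge>T. X t \<omega> \<le> L)"
    using stays_above_recurrent_AE by (rule AE_ball_countable'[rotated]) simp
  then show ?thesis
  proof eventually_elim
    case (elim \<omega>)
    show ?case
    proof
      assume above: "\<forall>t\<ge>t0. a < X t \<omega>"
      have "\<exists>T. \<forall>t\<ge>T. Z \<le> X t \<omega>" for Z
      proof -
        have "\<not> (\<forall>T. \<exists>t\<ge>T. X t \<omega> \<le> max Z (a + 1))" using elim above by simp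
        then obtain T where "\<forall>t\<ge>T. \<not> X t \<omega> \<le> max Z (a + 1)" by blast
        then have "\<forall>t\<ge>T. Z \<le> X t \<omega>" by (auto simp: not_le)
        then show ?thesis by blast
      qed
      then show "filterlim (\<lambda>n. X n \<omega>) at_top sequentially"
        by (simp add: filterlim_at_top eventually_sequentially)
    qed
  qed
qed

end

section \<open>Transferring positivity between the two walks\<close>

lemma (in finite_measure) exists_pos_measure_of_AE_cover:
  assumes "countable I" "\<And>i. i \<in> I \<Longrightarrow> G i \<in> sets M"
    and "AE x in M. x \<in> E \<longrightarrow> (\<exists>i\<in>I. x \<in> G i)" and "0 < measure M E"
  shows "\<exists>i\<in>I. 0 < measure M (G i)"
proof (rule ccontr)
  assume nopos: "\<not> (\<exists>i\<in>I. 0 < measure M (G i))"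
  have "G i \<in> null_sets M" if "i \<in> I" for i
  proof -
    have "\<not> 0 < measure M (G i)" using nopos that by blast
    then have "measure M (G i) = 0" using measure_nonneg[of M "G i"] by linarith
    then show ?thesis using assms(2)[OF that] by (simp add: emeasure_eq_measure null_setsI)
  qed
  then have null: "(\<Union>i\<in>I. G i) \<in> null_sets M" by (rule null_sets_UN'[OF assms(1)])
  have "measure M E \<le> measure M (\<Union>i\<in>I. G i)"
    by (rule finite_measure_mono_AE) (use assms(3) null in auto)
  also have "\<dots> = 0" using null by (simp add: emeasure_eq_measure null_sets_def)
  finally show False using assms(4) by simp
qed

text \<open>\<open>p @ u\<close> is a path from \<open>k\<close> whose part \<open>u\<close> starts with a last visit to \<open>v\<close> and
  ends at a height dominating \<open>p\<close>.\<close>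

definition exit_decomposition :: "int \<Rightarrow> int \<Rightarrow> int list \<Rightarrow> int list \<Rightarrow> bool" where
  "exit_decomposition k v p u \<longleftrightarrow> nn_path (p @ u) \<and> hd (p @ u) = k \<and> u \<noteq> [] \<and> hd u = v \<and>
     (\<forall>e\<in>set (tl u). v < e) \<and> (\<forall>e\<in>set p. e \<le> last u)"

lemma exit_decomposition_le_last: "exit_decomposition k v p u \<Longrightarrow> v \<le> last u"
  unfolding exit_decomposition_def by (cases u rule: rev_cases) (auto simp: tl_append split: list.splits)

lemma exit_decomposition_path_prob_pos:
  assumes "valid_env w" "\<forall>x\<in>{0..1}. 0 < f x \<and> f x < 1" and e: "exit_decomposition k v p u"
  shows "0 < path_prob f w k (p @ u @ [last u + 1])" "0 < path_prob f w v (u @ [last u + 1])"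
proof -
  have u: "u \<noteq> []" "hd u = v" and s: "nn_path (p @ u)" "hd (p @ u) = k"
    using e unfolding exit_decomposition_def by auto
  have nn: "nn_path ((p @ u) @ [last u + 1])" using nn_path_snoc_iff[of "p @ u" "last u + 1"] s u by simp
  moreover have "hd (p @ u @ [last u + 1]) = k" using s u by (cases p) simp_all
  ultimately show "0 < path_prob f w k (p @ u @ [last u + 1])"
    using path_prob_pos[OF assms(1,2)] by simp
  have "nn_path (u @ [last u + 1])" using nn_path_drop[OF nn, of "length p"] by simp
  then show "0 < path_prob f w v (u @ [last u + 1])"
    using path_prob_pos[OF assms(1,2)] u by simp
qed

context grrw_walk
begin

lemma nn_steps_AE: "AE \<omega> in M. X 0 \<omega> = k \<and> (\<forall>i. \<bar>X (Suc i) \<omega> - X i \<omega>\<bar> = 1)"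
proof -
  have step_null: "{\<omega> \<in> space M. \<bar>X (Suc i) \<omega> - X i \<omega>\<bar> \<noteq> 1} \<in> null_sets M" for i
  proof -
    define Q where "Q ys \<longleftrightarrow> \<bar>ys ! Suc i - ys ! i\<bar> \<noteq> 1" for ys :: "int list"
    have eq: "{\<omega> \<in> space M. \<bar>X (Suc i) \<omega> - X i \<omega>\<bar> \<noteq> 1} = {\<omega> \<in> space M. Q (traj \<omega> (Suc i))}"
      unfolding Q_def by (simp add: traj_nth)
    have "nn_sum (\<lambda>ys. pp ys * of_bool (Q ys)) (Suc i) [k] = 0"
      by (rule nn_sum_eq_0) (auto simp: nn_extension_def Q_def)
    then show ?thesis
      unfolding eq using measure_traj_pred_start[of Q "Suc i"] by (intro null_setsI_measure traj_pred_sets) simp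
  qed
  have "space M - {\<omega> \<in> space M. X 0 \<omega> = k \<and> (\<forall>i. \<bar>X (Suc i) \<omega> - X i \<omega>\<bar> = 1)}
      = (space M - {\<omega> \<in> space M. X 0 \<omega> = k}) \<union> (\<Union>i. {\<omega> \<in> space M. \<bar>X (Suc i) \<omega> - X i \<omega>\<bar> \<noteq> 1})"
    by auto
  also have "\<dots> \<in> null_sets M"
    using wrong_start_null step_null by (intro null_sets.Un null_sets_UN) auto
  finally show ?thesis by (rule AE_I') auto
qed

lemma escape_AE_exit_decomposition:
  assumes "k \<le> v"
  shows "AE \<omega> in M. filterlim (\<lambda>n. X n \<omega>) at_top sequentially \<longrightarrow>
    (\<exists>(p, u)\<in>{(p, u). exit_decomposition k v p u}. \<omega> \<in> follow_above (p @ u) (last u))"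
  using nn_steps_AE AE_space
proof eventually_elim
  case (elim \<omega>)
  show ?case
  proof
    assume "filterlim (\<lambda>n. X n \<omega>) at_top sequentially"
    then have "\<forall>Z. \<exists>T. \<forall>t\<ge>T. Z \<le> X t \<omega>" by (simp add: filterlim_at_top eventually_sequentially)
    then obtain \<tau> \<sigma> where ts: "\<tau> \<le> \<sigma>" "X \<tau> \<omega> = v" "\<forall>i>\<tau>. v < X i \<omega>"
      "\<forall>i\<le>\<tau>. X i \<omega> \<le> X \<sigma> \<omega>" "\<forall>t>\<sigma>. X \<sigma> \<omega> < X t \<omega>"
      using nn_seq_escape_decomposition[of "\<lambda>i. X i \<omega>" v] elim assms by auto
    define s where "s = traj \<omega> \<sigma>"
    have ls: "length s = Suc \<sigma>" and sn: "\<And>i. i \<le> \<sigma> \<Longrightarrow> s ! i = X i \<omega>"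
      unfolding s_def by (simp_all add: traj_nth)
    have last: "last (drop \<tau> s) = X \<sigma> \<omega>" using ls sn[of \<sigma>] ts(1) by (simp add: last_conv_nth)
    have "exit_decomposition k v (take \<tau> s) (drop \<tau> s)"
      unfolding exit_decomposition_def
    proof (intro conjI ballI)
      show "nn_path (take \<tau> s @ drop \<tau> s)" using elim ls sn by (simp add: nn_path_def)
      show "hd (take \<tau> s @ drop \<tau> s) = k" using elim sn[of 0] ls hd_conv_nth[of s] by (cases s) auto
      show "drop \<tau> s \<noteq> []" "hd (drop \<tau> s) = v" using ts ls sn by (simp_all add: hd_drop_conv_nth)
      show "v < e" if "e \<in> set (tl (drop \<tau> s))" for e
        using that ts(3) sn ls by (auto simp: in_set_conv_nth drop_Suc[symmetric] tl_drop)
      show "e \<le> last (drop \<tau> s)" if "e \<in> set (take \<tau> s)" for e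
        using that ts(1,4) sn last by (auto simp: in_set_conv_nth)
    qed
    moreover have "\<omega> \<in> follow_above (take \<tau> s @ drop \<tau> s) (last (drop \<tau> s))"
      using elim ls sn ts(5) last unfolding follow_above_def
      by (auto simp: less_Suc_eq_le Suc_le_eq)
    ultimately show "\<exists>(p, u)\<in>{(p, u). exit_decomposition k v p u}. \<omega> \<in> follow_above (p @ u) (last u)"
      by blast
  qed
qed

lemma follow_above_subset_no_return:
  assumes "u \<noteq> []" "\<forall>e\<in>set (tl u). v < e" "v \<le> last u"
  shows "follow_above u (last u) \<subseteq> {\<omega> \<in> space M. \<forall>n>0. v < X n \<omega>}"
proof
  fix \<omega> assume h: "\<omega> \<in> follow_above u (last u)"
  have "v < X n \<omega>" if "0 < n" for n
  proof (cases "n < length u")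
    case True
    then have "X n \<omega> \<in> set (tl u)" using h that unfolding follow_above_def
      by (auto simp: in_set_conv_nth nth_tl intro!: exI[of _ "n - 1"])
    then show ?thesis using assms(2) by blast
  next
    case False
    then have "last u < X n \<omega>" using h unfolding follow_above_def by (simp add: not_less)
    then show ?thesis using assms(3) by simp
  qed
  then show "\<omega> \<in> {\<omega> \<in> space M. \<forall>n>0. v < X n \<omega>}" using h unfolding follow_above_def by blast
qed

end

lemma escape_imp_no_return:
  assumes A: "grrw_walk f w 0 M X" and B: "grrw_walk f w k N Y" and "0 \<le> k"
    and pos: "0 < measure M {\<omega> \<in> space M. filterlim (\<lambda>n. X n \<omega>) at_top sequentially}"
  shows "0 < measure N {\<omega> \<in> space N. \<forall>n>0. k < Y n \<omega>}"
proof -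
  interpret A: grrw_walk f w 0 M X by (rule A)
  interpret B: grrw_walk f w k N Y by (rule B)
  have cover: "AE \<omega> in M. \<omega> \<in> {\<omega> \<in> space M. filterlim (\<lambda>n. X n \<omega>) at_top sequentially} \<longrightarrow>
      (\<exists>i\<in>{(p, u). exit_decomposition 0 k p u}. \<omega> \<in> (\<lambda>(p, u). A.follow_above (p @ u) (last u)) i)"
    using A.escape_AE_exit_decomposition[OF assms(3)] by eventually_elim simp
  have "\<exists>i\<in>{(p, u). exit_decomposition 0 k p u}.
      0 < measure M ((\<lambda>(p, u). A.follow_above (p @ u) (last u)) i)"
    by (rule A.exists_pos_measure_of_AE_cover[OF countableI_type _ cover pos])
      (simp add: A.follow_above_sets split: prod.splits)
  then obtain i where "i \<in> {(p, u). exit_decomposition 0 k p u}"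
    "0 < measure M ((\<lambda>(p, u). A.follow_above (p @ u) (last u)) i)" ..
  then obtain p u where e: "exit_decomposition 0 k p u"
    and G: "0 < measure M (A.follow_above (p @ u) (last u))"
    by (cases i) auto
  have u: "u \<noteq> []" "\<forall>e\<in>set (tl u). k < e" "\<forall>e\<in>set p. e \<le> last u"
    using e unfolding exit_decomposition_def by auto
  have "measure N (B.follow_above u (last u)) * path_prob f w 0 (p @ u @ [last u + 1])
      = measure M (A.follow_above (p @ u) (last u)) * path_prob f w k (u @ [last u + 1])"
    using follow_above_transfer[OF A B u(1) u(3), of "[]"] by simp
  then have "0 < measure N (B.follow_above u (last u))"
    using G exit_decomposition_path_prob_pos[OF A.valid_w A.f_bounds e]
    by (metis mult_pos_pos zero_less_mult_pos2)
  also have "\<dots> \<le> measure N {\<omega> \<in> space N. \<forall>n>0. k < Y n \<omega>}"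
    using B.follow_above_subset_no_return[OF u(1,2) exit_decomposition_le_last[OF e]]
    by (intro B.finite_measure_mono B.X_all_sets)
  finally show ?thesis .
qed

lemma no_return_imp_escape:
  assumes A: "grrw_walk_bounded f w 0 M X c" and B: "grrw_walk f w k N Y" and k: "0 \<le> k"
    and pos: "0 < measure N {\<omega> \<in> space N. \<forall>n>0. k < Y n \<omega>}"
  shows "0 < measure M {\<omega> \<in> space M. filterlim (\<lambda>n. X n \<omega>) at_top sequentially}"
proof -
  interpret A: grrw_walk_bounded f w 0 M X c by (rule A)
  interpret B: grrw_walk f w k N Y by (rule B)
  define p where "p = map int [0..<nat k]"
  define q where "q = map int [0..<nat k + 2]"
  have climb: "p @ [k] @ [k + 1] = q" unfolding p_def q_def using k by simp
  have q: "length q = nat k + 2" "\<And>i. i < nat k + 2 \<Longrightarrow> q ! i = int i" "q \<noteq> []"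
    unfolding q_def by (simp_all del: upt_Suc)
  have "measure N {\<omega> \<in> space N. \<forall>n>0. k < Y n \<omega>} \<le> measure N (B.follow_above [k] k)"
    using B.nn_steps_AE by (intro B.finite_measure_mono_AE B.follow_above_sets)
      (auto simp: B.follow_above_def elim!: eventually_mono)
  then have "0 < measure N (B.follow_above [k] k)" using pos by simp
  moreover have "0 < path_prob f w 0 (p @ [k] @ [k + 1])"
    unfolding climb using q
    by (intro path_prob_pos[OF A.valid_w A.f_bounds]) (auto simp: nn_path_def hd_conv_nth)
  moreover have "0 < path_prob f w k [k, k + 1]"
    by (rule path_prob_pos[OF A.valid_w A.f_bounds]) (auto simp: nn_path_def nth_Cons')
  moreover have "measure N (B.follow_above [k] k) * path_prob f w 0 (p @ [k] @ [k + 1])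
      = measure M (A.follow_above (p @ [k]) k) * path_prob f w k [k, k + 1]"
  proof -
    have "\<forall>e\<in>set p. e \<le> last [k]" unfolding p_def by auto
    then show ?thesis using follow_above_transfer[OF A.grrw_walk_axioms B, of "[k]" p "[]"] by simp
  qed
  ultimately have "0 < measure M (A.follow_above (p @ [k]) k)"
    by (metis mult_pos_pos zero_less_mult_pos2)
  also have "\<dots> \<le> measure M {\<omega> \<in> space M. filterlim (\<lambda>n. X n \<omega>) at_top sequentially}"
    using A.stays_above_escapes_AE[of "length (p @ [k])" k]
    by (intro A.finite_measure_mono_AE A.escape_sets)
      (auto simp: A.follow_above_def elim!: eventually_mono)
  finally show ?thesis .
qed

theorem lemma2:
  fixes f :: "real \<Rightarrow> real" and w0 :: env and k :: int
    and M :: "'a measure" and X :: "nat \<Rightarrow> 'a \<Rightarrow> int"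
    and N :: "'b measure" and Y :: "nat \<Rightarrow> 'b \<Rightarrow> int"
  assumes "\<forall>x\<in>{0..1}. 0 < f x \<and> f x < 1"
    and "C3_on_unit f"
    and "isolated_fixed_points f"
    and "valid_env w0"
    and "k \<ge> 0"
    and "is_grrw f w0 0 M X"
    and "is_grrw f w0 k N Y"
  shows "measure M {\<omega> \<in> space M. filterlim (\<lambda>n. X n \<omega>) at_top sequentially} > 0
     \<longleftrightarrow> measure N {\<omega> \<in> space N. \<forall>n>0. Y n \<omega> > k} > 0"
proof -
  obtain c where c: "0 < c" "\<forall>x\<in>{0..1}. c \<le> f x \<and> c \<le> 1 - f x"
    using continuous_on_unit_bounded_away[OF C3_on_unit_continuous[OF assms(2)] assms(1)] .
  have A: "grrw_walk_bounded f w0 0 M X c"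
    using assms c by unfold_locales (simp_all add: grrw_walk_def)
  have B: "grrw_walk f w0 k N Y"
    using assms by unfold_locales
  show ?thesis
    using escape_imp_no_return[OF grrw_walk_bounded.axioms(1)[OF A] B assms(5)]
      no_return_imp_escape[OF A B assms(5)] by blast
qed

end
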